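(* $P_h(\mathbb{S}^1)=\{0,1,2,3,\ldots\}\cup\{+\infty\}$, where $\mathbb{S}^1=\{e^{2\pi i\theta}:\theta\in[0,1]\}$ is the unit circle.
   Context: For a topological space $A$, $Homeo(A)$ denotes the group of all homeomorphisms $A\to A$ under composition. For a subgroup $G$ of $Homeo(A)$ (acting by $gx=g(x)$), a nonempty subset $Y\subseteq A$ is invariant if $g(y)\in Y$ for all $g\in G$, $y\in Y$. The height of $(G,A)$ is $h(G,A)=\sup\{n\geq 0:$ there exist distinct closed invariant subsets $Y_0\subset Y_1\subset\cdots\subset Y_n=A\}$ (possibly $+\infty$). Finally $P_h(A)=\{h(G,A): G \text{ is a subgroup of } Homeo(A)\}$. *)

theory Defs
  imports "HOL-Analysis.Analysis" "HOL-Library.Extended_Nat"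
begin

text \<open>Homeomorphisms of a topological space X, normalised to be the identity
  outside the carrier, so that Homeo X is faithfully the group of self-homeomorphisms
  (composition as group operation, id as unit).\<close>
definition Homeo :: "'a topology \<Rightarrow> ('a \<Rightarrow> 'a) set" where
  "Homeo X = {f. homeomorphic_map X X f \<and> (\<forall>x. x \<notin> topspace X \<longrightarrow> f x = x)}"

definition homeo_inv :: "'a topology \<Rightarrow> ('a \<Rightarrow> 'a) \<Rightarrow> 'a \<Rightarrow> 'a" where
  "homeo_inv X f = (\<lambda>y. if y \<in> topspace X then inv_into (topspace X) f y else y)"

definition homeo_subgroup :: "'a topology \<Rightarrow> ('a \<Rightarrow> 'a) set \<Rightarrow> bool" where
  "homeo_subgroup X G \<longleftrightarrow> G \<subseteq> Homeo X \<and> id \<in> G \<and>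
     (\<forall>f\<in>G. \<forall>g\<in>G. f \<circ> g \<in> G) \<and> (\<forall>f\<in>G. homeo_inv X f \<in> G)"

definition invariant_set :: "'a topology \<Rightarrow> ('a \<Rightarrow> 'a) set \<Rightarrow> 'a set \<Rightarrow> bool" where
  "invariant_set X G Y \<longleftrightarrow> Y \<noteq> {} \<and> Y \<subseteq> topspace X \<and> (\<forall>g\<in>G. \<forall>y\<in>Y. g y \<in> Y)"

definition height :: "('a \<Rightarrow> 'a) set \<Rightarrow> 'a topology \<Rightarrow> enat" where
  "height G X = Sup {enat n | n. \<exists>Y :: nat \<Rightarrow> 'a set.
      (\<forall>i\<le>n. closedin X (Y i) \<and> invariant_set X G (Y i)) \<and>
      (\<forall>i<n. Y i \<subset> Y (Suc i)) \<and> Y n = topspace X}"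

definition P_h :: "'a topology \<Rightarrow> enat set" where
  "P_h X = {height G X | G. homeo_subgroup X G}"

end

(* Height 0 is realised by the full homeomorphism group, which is transitive (rotations), and
   height infinity by the trivial group, for which sublevel sets of the real part form closed
   invariant chains of every length.

   For N > 0 cut the circle by the levels of s = N (1 - Re z) / 4, which runs over [0, N/2]:
   the points with s = m form piece 2m and those with m < s < m + 1 form piece 2m + 1. Let G_N
   be the group of homeomorphisms preserving every piece. Complex conjugation and homeomorphisms
   that reparametrise the real part monotonically on the upper half circle (together with a
   rotated one near -1) show that G_N acts transitively on every piece. Hence closed invariant
   sets are unions of pieces, every strict chain of them has length at most N, and adding the
   pieces one at a time, each open arc after its endpoints, gives a chain of length N. *)

theory Submission
  imports Defs
begin

section \<open>Homeomorphism groups and their height\<close>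

lemma Homeo_top_of_setI:
  assumes "continuous_on S f" "continuous_on S g" "f ` S \<subseteq> S" "g ` S \<subseteq> S"
    and "\<And>x. x \<in> S \<Longrightarrow> g (f x) = x" "\<And>y. y \<in> S \<Longrightarrow> f (g y) = y"
    and "\<And>x. x \<notin> S \<Longrightarrow> f x = x"
  shows "f \<in> Homeo (top_of_set S)"
proof -
  have "homeomorphic_maps (top_of_set S) (top_of_set S) f g"
    unfolding homeomorphic_maps_def using assms by auto
  then show ?thesis
    unfolding Homeo_def using assms(7) homeomorphic_maps_map by fastforce
qed

lemma Homeo_id: "id \<in> Homeo X"
  by (simp add: Homeo_def)

lemma Homeo_comp: "f \<in> Homeo X \<Longrightarrow> g \<in> Homeo X \<Longrightarrow> f \<circ> g \<in> Homeo X"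
  unfolding Homeo_def by (auto intro: homeomorphic_map_compose)

lemma Homeo_in_topspace: "h \<in> Homeo X \<Longrightarrow> z \<in> topspace X \<Longrightarrow> h z \<in> topspace X"
  unfolding Homeo_def using homeomorphic_imp_surjective_map by fastforce

lemma Homeo_homeo_inv:
  assumes "f \<in> Homeo X"
  shows "homeo_inv X f \<in> Homeo X"
    and "\<And>x. x \<in> topspace X \<Longrightarrow> homeo_inv X f (f x) = x"
    and "\<And>y. y \<in> topspace X \<Longrightarrow> f (homeo_inv X f y) = y"
proof -
  have hm: "homeomorphic_map X X f" using assms by (simp add: Homeo_def)
  then obtain g where g: "homeomorphic_maps X X f g" using homeomorphic_map_maps by blast
  have inj: "inj_on f (topspace X)" using hm by (simp add: homeomorphic_map_def)
  have fx: "\<And>x. x \<in> topspace X \<Longrightarrow> f x \<in> topspace X" "\<And>y. y \<in> topspace X \<Longrightarrow> g y \<in> topspace X"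
    using g unfolding homeomorphic_maps_def continuous_map_def by auto
  have gf: "\<And>x. x \<in> topspace X \<Longrightarrow> g (f x) = x" and fg: "\<And>y. y \<in> topspace X \<Longrightarrow> f (g y) = y"
    using g unfolding homeomorphic_maps_def by auto
  have eq: "\<And>y. y \<in> topspace X \<Longrightarrow> homeo_inv X f y = g y"
    unfolding homeo_inv_def using inj fx gf fg by (metis inv_into_f_f)
  have "homeomorphic_map X X g" using g homeomorphic_maps_sym homeomorphic_maps_map by blast
  then have "homeomorphic_map X X (homeo_inv X f)" using eq homeomorphic_map_eq by metis
  then show "homeo_inv X f \<in> Homeo X" by (simp add: Homeo_def homeo_inv_def)
  show "\<And>x. x \<in> topspace X \<Longrightarrow> homeo_inv X f (f x) = x" using eq gf fx by simp
  show "\<And>y. y \<in> topspace X \<Longrightarrow> f (homeo_inv X f y) = y" using eq fg by simp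
qed

lemma homeo_subgroup_stabiliser:
  "homeo_subgroup X {h \<in> Homeo X. \<forall>z\<in>topspace X. \<phi> (h z) = \<phi> z}"
proof -
  have "\<phi> (homeo_inv X h z) = \<phi> z"
    if h: "h \<in> Homeo X" "\<forall>z\<in>topspace X. \<phi> (h z) = \<phi> z" and z: "z \<in> topspace X" for h z
    using h Homeo_in_topspace[OF Homeo_homeo_inv(1)[OF h(1)] z] Homeo_homeo_inv(3)[OF h(1) z]
    by metis
  then show ?thesis
    unfolding homeo_subgroup_def
    by (auto simp: Homeo_id Homeo_comp Homeo_homeo_inv(1) Homeo_in_topspace)
qed

lemma homeo_subgroup_Homeo: "homeo_subgroup X (Homeo X)"
  using homeo_subgroup_stabiliser[of X "\<lambda>_. ()"] by simp

lemma homeo_subgroup_trivial: "homeo_subgroup X {id}"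
proof -
  have "homeo_inv X id = id" by (auto simp: homeo_inv_def)
  then show ?thesis unfolding homeo_subgroup_def using Homeo_id by auto
qed

definition in_orbit :: "('a \<Rightarrow> 'a) set \<Rightarrow> 'a \<Rightarrow> 'a \<Rightarrow> bool" where
  "in_orbit G z w \<longleftrightarrow> (\<exists>g\<in>G. g z = w)"

context
  fixes X :: "'a topology" and G :: "('a \<Rightarrow> 'a) set"
  assumes G: "homeo_subgroup X G"
begin

lemma in_orbit_refl: "in_orbit G z z"
  using G unfolding in_orbit_def homeo_subgroup_def by (metis id_apply)

lemma in_orbit_trans: "in_orbit G z w \<Longrightarrow> in_orbit G w v \<Longrightarrow> in_orbit G z v"
  using G unfolding in_orbit_def homeo_subgroup_def by (metis comp_apply)

lemma in_orbit_sym: "z \<in> topspace X \<Longrightarrow> in_orbit G z w \<Longrightarrow> in_orbit G w z"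
proof -
  assume z: "z \<in> topspace X" and "in_orbit G z w"
  then obtain g where g: "g \<in> G" "g z = w" by (auto simp: in_orbit_def)
  then have "homeo_inv X g \<in> G" "g \<in> Homeo X" using G by (auto simp: homeo_subgroup_def)
  moreover have "homeo_inv X g w = z" using g z Homeo_homeo_inv(2)[of g X z] G
    by (auto simp: homeo_subgroup_def)
  ultimately show ?thesis by (auto simp: in_orbit_def)
qed

end

definition closed_invariant_chain ::
    "('a \<Rightarrow> 'a) set \<Rightarrow> 'a topology \<Rightarrow> nat \<Rightarrow> (nat \<Rightarrow> 'a set) \<Rightarrow> bool" where
  "closed_invariant_chain G X n Y \<longleftrightarrow>
     (\<forall>i\<le>n. closedin X (Y i) \<and> invariant_set X G (Y i)) \<and>
     (\<forall>i<n. Y i \<subset> Y (Suc i)) \<and> Y n = topspace X"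

lemma height_eq_Sup_chains:
  "height G X = Sup {enat n | n. \<exists>Y. closed_invariant_chain G X n Y}"
  by (simp add: height_def closed_invariant_chain_def)

lemma chain_le_height: "closed_invariant_chain G X n Y \<Longrightarrow> enat n \<le> height G X"
  unfolding height_eq_Sup_chains by (rule Sup_upper) blast

lemma strict_chain_length_le_card:
  assumes "finite A" "\<And>i. i \<le> n \<Longrightarrow> J i \<subseteq> A" "J 0 \<noteq> {}" "\<And>i. i < n \<Longrightarrow> J i \<subset> J (Suc i)"
  shows "n + 1 \<le> card A"
proof -
  have "i \<le> n \<Longrightarrow> i + 1 \<le> card (J i)" for i
  proof (induction i)
    case 0
    then show ?case using assms by (metis One_nat_def Suc_leI add_0 card_gt_0_iff finite_subset le0)
  next
    case (Suc i)
    then have "card (J i) < card (J (Suc i))"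
      using assms by (meson Suc_le_lessD finite_subset psubset_card_mono)
    then show ?case using Suc by simp
  qed
  then have "n + 1 \<le> card (J n)" by simp
  also have "\<dots> \<le> card A" using assms by (simp add: card_mono)
  finally show ?thesis .
qed

text \<open>Invariant sets are unions of fibres of \<open>f\<close>, so a strict chain of them is a strict chain of
  subsets of \<open>{..N}\<close>.\<close>
lemma height_le_if_fibres_in_orbits:
  assumes f_le: "\<And>z. z \<in> topspace X \<Longrightarrow> f z \<le> N"
    and fibre: "\<And>z w. z \<in> topspace X \<Longrightarrow> w \<in> topspace X \<Longrightarrow> f z = f w \<Longrightarrow> in_orbit G z w"
  shows "height G X \<le> enat N"
proof -
  have "n \<le> N" if Z: "closed_invariant_chain G X n Z" for n Z
  proof -
    have inv: "invariant_set X G (Z i)" if "i \<le> n" for i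
      using Z that by (simp add: closed_invariant_chain_def)
    have "n + 1 \<le> card {..N}"
    proof (rule strict_chain_length_le_card[where J = "\<lambda>i. f ` Z i"])
      show "f ` Z i \<subseteq> {..N}" if "i \<le> n" for i
        using inv[OF that] f_le by (auto simp: invariant_set_def)
      show "f ` Z 0 \<noteq> {}" using inv[of 0] by (simp add: invariant_set_def)
      show "f ` Z i \<subset> f ` Z (Suc i)" if i: "i < n" for i
      proof -
        have ss: "Z i \<subset> Z (Suc i)" using Z i by (simp add: closed_invariant_chain_def)
        then obtain z where z: "z \<in> Z (Suc i)" "z \<notin> Z i" by blast
        have "f z \<notin> f ` Z i"
        proof
          assume "f z \<in> f ` Z i"
          then obtain w where w: "w \<in> Z i" "f w = f z" by auto
          have "z \<in> topspace X" "w \<in> topspace X"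
            using inv[of "Suc i"] inv[of i] z w i by (auto simp: invariant_set_def)
          then obtain g where "g \<in> G" "g w = z" using fibre w by (auto simp: in_orbit_def)
          then show False using inv[of i] i w z by (auto simp: invariant_set_def)
        qed
        then show ?thesis using ss z by blast
      qed
    qed simp
    then show ?thesis by simp
  qed
  then show ?thesis
    unfolding height_eq_Sup_chains by (intro Sup_least) auto
qed

section \<open>Reparametrising an interval\<close>

definition warp :: "real \<Rightarrow> real \<Rightarrow> real" where
  "warp l t = l * t / (1 + (l - 1) * t)"

lemma warp_denom_pos: "(l::real) > 0 \<Longrightarrow> 0 \<le> t \<Longrightarrow> t \<le> 1 \<Longrightarrow> 1 + (l - 1) * t > 0"
proof -
  assume a: "l > 0" "0 \<le> t" "t \<le> 1"
  have "(l - 1) * t = l * t - t" by (simp add: left_diff_distrib)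
  then have e: "1 + (l - 1) * t = (1 - t) + l * t" by linarith
  have "l * t \<ge> 0" using a by simp
  show ?thesis
  proof (cases "t < 1")
    case True then show ?thesis using e \<open>l * t \<ge> 0\<close> by linarith
  next
    case False then show ?thesis using a by simp
  qed
qed

lemma warp_0 [simp]: "warp l 0 = 0" and warp_1 [simp]: "l > 0 \<Longrightarrow> warp l 1 = 1"
  by (auto simp: warp_def)

lemma warp_less: "l > 0 \<Longrightarrow> 0 \<le> t \<Longrightarrow> t < t' \<Longrightarrow> t' \<le> 1 \<Longrightarrow> warp l t < warp l t'"
proof -
  assume a: "l > 0" "0 \<le> t" "t < t'" "t' \<le> 1"
  have d: "1 + (l - 1) * t > 0" "1 + (l - 1) * t' > 0"
    using warp_denom_pos[of l t] warp_denom_pos[of l t'] a by simp_all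
  have "l * t * (1 + (l - 1) * t') - l * t' * (1 + (l - 1) * t) = l * (t - t')"
    by (simp add: algebra_simps)
  moreover have "l * (t - t') < 0" using a by (simp add: mult_pos_neg)
  ultimately show ?thesis unfolding warp_def using d by (simp add: divide_simps)
qed

lemma warp_inverse: "l > 0 \<Longrightarrow> 0 \<le> t \<Longrightarrow> t \<le> 1 \<Longrightarrow> warp (1/l) (warp l t) = t"
proof -
  assume a: "l > 0" "0 \<le> t" "t \<le> 1"
  define D where "D = 1 + (l - 1) * t"
  have D: "D > 0" using warp_denom_pos a by (simp add: D_def)
  have "(1 / l - 1) * l = 1 - l" using a by (simp add: field_simps)
  then have "(1 / l - 1) * (l * t / D) = (1 - l) * t / D" by (metis times_divide_eq_right mult.assoc)
  then have "(1 / l - 1) * (l * t / D) = (t - l * t) / D" by (simp add: left_diff_distrib)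
  moreover have "D + (t - l * t) = 1" by (simp add: D_def algebra_simps)
  ultimately have "1 + (1 / l - 1) * (l * t / D) = 1 / D" using D by (simp add: field_simps)
  moreover have "1 / l * (l * t / D) = t / D" using a by simp
  ultimately show ?thesis using D by (simp add: warp_def[of "1/l"] warp_def[of l] D_def[symmetric])
qed

lemma warp_surj:
  assumes "0 < a" "a < 1" "0 < b" "b < 1"
  shows "\<exists>l>0. warp l a = b"
proof -
  define l where "l = b * (1 - a) / (a * (1 - b))"
  have l: "l > 0" using assms by (simp add: l_def)
  have d: "1 + (l - 1) * a > 0" using warp_denom_pos[OF l, of a] assms by simp
  have "l * a * (1 - b) = b * (1 - a)" using assms unfolding l_def by simp
  then have "l * a = b * (1 + (l - 1) * a)" by (simp add: algebra_simps)
  then have "warp l a = b" unfolding warp_def using d by (simp add: divide_simps)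
  then show ?thesis using l by blast
qed

text \<open>\<open>warp l\<close> transported to \<open>[p,q]\<close> through the clamped affine coordinate, extended by the
  identity.\<close>
definition interval_coord :: "real \<Rightarrow> real \<Rightarrow> real \<Rightarrow> real" where
  "interval_coord p q x = max 0 (min 1 ((x - p) / (q - p)))"

lemma interval_coord_bounds: "0 \<le> interval_coord p q x \<and> interval_coord p q x \<le> 1"
  by (simp add: interval_coord_def)

definition interval_warp :: "real \<Rightarrow> real \<Rightarrow> real \<Rightarrow> real \<Rightarrow> real" where
  "interval_warp p q l x = x + (q - p) * (warp l (interval_coord p q x) - interval_coord p q x)"

lemma continuous_on_interval_warp: "l > 0 \<Longrightarrow> p < q \<Longrightarrow> continuous_on A (interval_warp p q l)"
proof -
  assume l: "l > 0" and pq: "p < q"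
  have "continuous_on A (interval_coord p q)"
    unfolding interval_coord_def using pq by (intro continuous_intros) auto
  moreover have "\<forall>x\<in>A. 1 + (l - 1) * interval_coord p q x \<noteq> 0"
    using warp_denom_pos[OF l] interval_coord_bounds by (metis less_irrefl)
  ultimately show ?thesis unfolding interval_warp_def warp_def
    by (intro continuous_intros) auto
qed

lemma interval_warp_outside: "p < q \<Longrightarrow> l > 0 \<Longrightarrow> x \<notin> {p<..<q} \<Longrightarrow> interval_warp p q l x = x"
proof -
  assume a: "p < q" "l > 0" "x \<notin> {p<..<q}"
  then have "(x - p) / (q - p) \<le> 0 \<or> (x - p) / (q - p) \<ge> 1"
    by (auto simp: divide_simps not_less)
  then have "interval_coord p q x = 0 \<or> interval_coord p q x = 1"
    by (auto simp: interval_coord_def)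
  then show ?thesis using a by (auto simp: interval_warp_def)
qed

lemma interval_warp_eq:
  "p < q \<Longrightarrow> x \<in> {p..q} \<Longrightarrow> interval_warp p q l x = p + (q - p) * warp l ((x - p) / (q - p))"
proof -
  assume a: "p < q" "x \<in> {p..q}"
  then have "interval_coord p q x = (x - p) / (q - p)"
    by (auto simp: interval_coord_def divide_simps)
  moreover have "(q - p) * ((x - p) / (q - p)) = x - p" using a by simp
  ultimately show ?thesis unfolding interval_warp_def by (simp add: right_diff_distrib)
qed

lemma interval_warp_in:
  "p < q \<Longrightarrow> l > 0 \<Longrightarrow> x \<in> {p<..<q} \<Longrightarrow> interval_warp p q l x \<in> {p<..<q}"
proof -
  assume a: "p < q" "l > 0" "x \<in> {p<..<q}"
  define t where "t = (x - p) / (q - p)"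
  have t: "0 < t" "t < 1" using a by (auto simp: t_def divide_simps)
  have "warp l 0 < warp l t" "warp l t < warp l 1"
    using warp_less[OF a(2), of 0 t] warp_less[OF a(2), of t 1] t by auto
  then have "0 < (q - p) * warp l t" "(q - p) * warp l t < q - p" using a by auto
  moreover have "interval_warp p q l x = p + (q - p) * warp l t"
    using interval_warp_eq[OF a(1), of x l] a by (simp add: t_def)
  ultimately show ?thesis by simp
qed

lemma interval_warp_inverse: "p < q \<Longrightarrow> l > 0 \<Longrightarrow> interval_warp p q (1/l) (interval_warp p q l x) = x"
proof (cases "x \<in> {p<..<q}")
  case True
  assume a: "p < q" "l > 0"
  define t where "t = (x - p) / (q - p)"
  have t: "0 \<le> t" "t \<le> 1" using a True by (auto simp: t_def divide_simps)
  have y: "interval_warp p q l x = p + (q - p) * warp l t"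
    using interval_warp_eq[OF a(1)] True by (simp add: t_def)
  have "interval_warp p q l x \<in> {p..q}" using interval_warp_in[OF a True] by auto
  then have "interval_warp p q (1/l) (interval_warp p q l x) = p + (q - p) * warp (1/l) (warp l t)"
    using interval_warp_eq[OF a(1)] y a(1) by simp
  also have "\<dots> = x" using warp_inverse[OF a(2) t] a by (simp add: t_def)
  finally show ?thesis .
next
  case False
  assume a: "p < q" "l > 0"
  then show ?thesis using interval_warp_outside[OF a] interval_warp_outside[OF a(1), of "1/l"] False
    by auto
qed

lemma interval_warp_surj:
  assumes "p < q" "a \<in> {p<..<q}" "b \<in> {p<..<q}"
  shows "\<exists>l>0. interval_warp p q l a = b"
proof -
  obtain l where l: "l > 0" "warp l ((a - p) / (q - p)) = (b - p) / (q - p)"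
    using warp_surj[of "(a - p) / (q - p)" "(b - p) / (q - p)"] assms by (auto simp: divide_simps)
  then show ?thesis using interval_warp_eq[OF assms(1), of a l] assms by auto
qed

section \<open>Homeomorphisms of the circle\<close>

abbreviation S1 :: "complex set" where "S1 \<equiv> sphere 0 1"

lemma in_S1_iff: "z \<in> S1 \<longleftrightarrow> (Re z)\<^sup>2 + (Im z)\<^sup>2 = 1"
  by (simp add: norm_complex_def)

lemma Re_S1: "z \<in> S1 \<Longrightarrow> Re z \<in> {-1..1}"
proof -
  assume "z \<in> S1"
  then have "(Re z)\<^sup>2 \<le> 1" using in_S1_iff by (metis le_add_same_cancel1 zero_le_power2)
  then show ?thesis using abs_square_le_1[of "Re z"] by auto
qed

lemma S1_eq_if_Re_eq: "z \<in> S1 \<Longrightarrow> w \<in> S1 \<Longrightarrow> Re z = Re w \<Longrightarrow> w = z \<or> w = cnj z"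
proof -
  assume a: "z \<in> S1" "w \<in> S1" "Re z = Re w"
  then have "(Im w)\<^sup>2 = (Im z)\<^sup>2" using in_S1_iff by (metis add_left_cancel)
  then have "Im w = Im z \<or> Im w = - Im z" using power2_eq_iff by blast
  then show ?thesis using a by (auto simp: complex_eq_iff)
qed

definition upper_point :: "real \<Rightarrow> complex" where
  "upper_point x = complex_of_real x + \<i> * complex_of_real (sqrt (1 - x\<^sup>2))"

lemma Re_upper_point [simp]: "Re (upper_point x) = x"
  by (simp add: upper_point_def)

lemma Im_upper_point_nonneg: "x \<in> {-1..1} \<Longrightarrow> Im (upper_point x) \<ge> 0"
  using abs_square_le_1[of x] by (auto simp: upper_point_def)

lemma upper_point_in_S1: "x \<in> {-1..1} \<Longrightarrow> upper_point x \<in> S1"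
proof -
  assume "x \<in> {-1..1}"
  then have "x\<^sup>2 \<le> 1" using abs_square_le_1[of x] by auto
  then show ?thesis unfolding in_S1_iff by (simp add: upper_point_def)
qed

lemma upper_point_Re: "z \<in> S1 \<Longrightarrow> Im z \<ge> 0 \<Longrightarrow> upper_point (Re z) = z"
proof -
  assume a: "z \<in> S1" "Im z \<ge> 0"
  then have "1 - (Re z)\<^sup>2 = (Im z)\<^sup>2" using in_S1_iff by (simp add: algebra_simps)
  then have "sqrt (1 - (Re z)\<^sup>2) = Im z" using a by simp
  then show ?thesis by (simp add: upper_point_def complex_eq_iff)
qed

definition arc_warp :: "real \<Rightarrow> real \<Rightarrow> real \<Rightarrow> complex \<Rightarrow> complex" where
  "arc_warp p q l z =
     (if z \<in> S1 \<and> Im z \<ge> 0 then upper_point (interval_warp p q l (Re z)) else z)"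

locale arc_warp_data =
  fixes p q l :: real
  assumes p: "-1 \<le> p" and pq: "p < q" and q: "q \<le> 1" and l: "l > 0"
begin

lemma interval_warp_S1: "x \<in> {-1..1} \<Longrightarrow> interval_warp p q l x \<in> {-1..1}"
  using interval_warp_in[OF pq l, of x] interval_warp_outside[OF pq l, of x] p q
  by (cases "x \<in> {p<..<q}") auto

lemma arc_warp_in_S1: "z \<in> S1 \<Longrightarrow> arc_warp p q l z \<in> S1"
  using upper_point_in_S1 interval_warp_S1 Re_S1 by (simp add: arc_warp_def)

lemma Im_arc_warp_nonneg: "z \<in> S1 \<Longrightarrow> Im z \<ge> 0 \<Longrightarrow> Im (arc_warp p q l z) \<ge> 0"
  using Im_upper_point_nonneg interval_warp_S1 Re_S1 by (simp add: arc_warp_def)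

lemma Re_arc_warp: "z \<in> S1 \<Longrightarrow> Im z \<ge> 0 \<Longrightarrow> Re (arc_warp p q l z) = interval_warp p q l (Re z)"
  by (simp add: arc_warp_def)

lemma arc_warp_outside: "z \<in> S1 \<Longrightarrow> Re z \<notin> {p<..<q} \<Longrightarrow> arc_warp p q l z = z"
  using interval_warp_outside[OF pq l] upper_point_Re by (auto simp: arc_warp_def)

lemma Re_arc_warp_in: "z \<in> S1 \<Longrightarrow> Re z \<in> {p<..<q} \<Longrightarrow> Re (arc_warp p q l z) \<in> {p<..<q}"
  unfolding arc_warp_def using interval_warp_in[OF pq l] by auto

lemma arc_warp_inverse:
  assumes z: "z \<in> S1"
  shows "arc_warp p q (1/l) (arc_warp p q l z) = z"
proof (cases "Im z \<ge> 0")
  case True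
  have "arc_warp p q (1/l) (arc_warp p q l z) = upper_point (interval_warp p q (1/l) (Re (arc_warp p q l z)))"
    using arc_warp_in_S1[OF z] Im_arc_warp_nonneg[OF z True] by (simp add: arc_warp_def[of p q "1/l"])
  also have "\<dots> = z"
    using Re_arc_warp[OF z True] interval_warp_inverse[OF pq l] upper_point_Re[OF z True] by simp
  finally show ?thesis .
qed (simp add: arc_warp_def)

text \<open>On the real axis the circle meets neither open half, and there \<open>arc_warp\<close> is the identity
  since \<open>-1 \<le> p < q \<le> 1\<close>; so the two pieces glue continuously.\<close>
lemma continuous_on_arc_warp: "continuous_on S1 (arc_warp p q l)"
proof -
  let ?F = "\<lambda>z. upper_point (interval_warp p q l (Re z))"
  have "continuous_on A ?F" for A
  proof -
    have "continuous_on A (\<lambda>z. interval_warp p q l (Re z))"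
      by (rule continuous_on_compose2[OF continuous_on_interval_warp[OF l pq, of UNIV]])
        (auto intro: continuous_intros)
    then show ?thesis unfolding upper_point_def by (intro continuous_intros)
  qed
  moreover have "closed (S1 \<inter> {z. Im z \<ge> 0})" "closed (S1 \<inter> {z. Im z \<le> 0})"
    by (intro closed_Int closed_sphere closed_Collect_le continuous_intros)+
  ultimately have "continuous_on ((S1 \<inter> {z. Im z \<ge> 0}) \<union> (S1 \<inter> {z. Im z \<le> 0}))
      (\<lambda>z. if Im z \<ge> 0 then ?F z else z)"
  proof (intro continuous_on_cases continuous_on_id allI impI)
    fix z assume "z \<in> S1 \<inter> {z. 0 \<le> Im z} \<and> \<not> 0 \<le> Im z \<or> z \<in> S1 \<inter> {z. Im z \<le> 0} \<and> 0 \<le> Im z"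
    then have z: "z \<in> S1" "Im z = 0" by auto
    then have "Re z \<notin> {p<..<q}"
      using in_S1_iff[of z] p q by (auto simp: power2_eq_1_iff)
    then have "arc_warp p q l z = z" using arc_warp_outside z by blast
    then show "?F z = z" using z by (simp add: arc_warp_def)
  qed
  moreover have "(S1 \<inter> {z. Im z \<ge> 0}) \<union> (S1 \<inter> {z. Im z \<le> 0}) = S1" by auto
  ultimately show ?thesis
    by (elim continuous_on_cong[THEN iffD1, rotated 2]) (auto simp: arc_warp_def)
qed

end

lemma arc_warp_data_inverse: "arc_warp_data p q l \<Longrightarrow> arc_warp_data p q (1/l)"
  unfolding arc_warp_data_def by auto

lemma arc_warp_Homeo:
  assumes "arc_warp_data p q l"
  shows "arc_warp p q l \<in> Homeo (top_of_set S1)"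
proof (rule Homeo_top_of_setI[where g = "arc_warp p q (1/l)"])
  interpret fwd: arc_warp_data p q l by fact
  interpret bwd: arc_warp_data p q "1/l" using arc_warp_data_inverse assms .
  show "continuous_on S1 (arc_warp p q l)" "continuous_on S1 (arc_warp p q (1/l))"
    by (rule fwd.continuous_on_arc_warp bwd.continuous_on_arc_warp)+
  show "arc_warp p q l ` S1 \<subseteq> S1" "arc_warp p q (1/l) ` S1 \<subseteq> S1"
    using fwd.arc_warp_in_S1 bwd.arc_warp_in_S1 by blast+
  show "arc_warp p q (1/l) (arc_warp p q l x) = x" if "x \<in> S1" for x
    using fwd.arc_warp_inverse that .
  show "arc_warp p q l (arc_warp p q (1/l) y) = y" if "y \<in> S1" for y
    using bwd.arc_warp_inverse[OF that] by simp
  show "arc_warp p q l x = x" if "x \<notin> S1" for x using that by (simp add: arc_warp_def)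
qed

definition rotation :: "complex \<Rightarrow> complex \<Rightarrow> complex" where
  "rotation u z = (if z \<in> S1 then u * z else z)"

lemma rotation_Homeo: "cmod u = 1 \<Longrightarrow> rotation u \<in> Homeo (top_of_set S1)"
proof (rule Homeo_top_of_setI[where g = "rotation (cnj u)"])
  assume u: "cmod u = 1"
  have uu: "cnj u * u = 1" "u * cnj u = 1"
    using u complex_norm_square[of u] by (simp_all add: mult.commute)
  show "continuous_on S1 (rotation u)" "continuous_on S1 (rotation (cnj u))"
    by (auto simp: rotation_def intro!: continuous_on_cong[THEN iffD1, OF refl _
          continuous_on_mult_left[OF continuous_on_id]])
  show "rotation u ` S1 \<subseteq> S1" "rotation (cnj u) ` S1 \<subseteq> S1"
    using u by (auto simp: rotation_def norm_mult)
  show "rotation (cnj u) (rotation u x) = x" "rotation u (rotation (cnj u) x) = x" if "x \<in> S1" for x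
    using that u uu by (auto simp: rotation_def norm_mult mult.assoc[symmetric])
  show "rotation u x = x" if "x \<notin> S1" for x using that by (simp add: rotation_def)
qed

definition reflection :: "complex \<Rightarrow> complex" where
  "reflection z = (if z \<in> S1 then cnj z else z)"

lemma reflection_Homeo: "reflection \<in> Homeo (top_of_set S1)"
proof -
  have cont: "continuous_on S1 reflection"
    by (rule continuous_on_cong[THEN iffD1, OF refl _ continuous_on_cnj[OF continuous_on_id]])
      (auto simp: reflection_def)
  show ?thesis by (rule Homeo_top_of_setI[OF cont cont]) (auto simp: reflection_def)
qed

section \<open>The pieces and their stabiliser\<close>

text \<open>\<open>level s\<close> is \<open>2m\<close> at \<open>s = m\<close> and \<open>2m+1\<close> on \<open>]m, m+1[\<close>.\<close>
definition level :: "real \<Rightarrow> nat" where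
  "level s = nat (\<lfloor>s\<rfloor> + \<lceil>s\<rceil>)"

lemma level_of_nat: "level (real m) = 2 * m"
  by (simp add: level_def)

lemma level_between: "real k < s \<Longrightarrow> s < real k + 1 \<Longrightarrow> level s = 2 * k + 1"
proof -
  assume a: "real k < s" "s < real k + 1"
  then have "\<lfloor>s\<rfloor> = int k" "\<lceil>s\<rceil> = int k + 1" by (simp_all add: floor_eq_iff ceiling_eq_iff)
  then show ?thesis by (simp add: level_def)
qed

lemma level_cases:
  assumes "s \<ge> 0"
  obtains m where "s = real m" "level s = 2 * m"
  | k where "real k < s" "s < real k + 1" "level s = 2 * k + 1"
proof -
  define k where "k = nat \<lfloor>s\<rfloor>"
  have k: "real k \<le> s" "s < real k + 1" using assms by (simp_all add: k_def)
  show ?thesis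
  proof (cases "s = real k")
    case True then show ?thesis using that(1) level_of_nat by metis
  next
    case False then show ?thesis using that(2) level_between k by force
  qed
qed

lemma level_even: "s \<ge> 0 \<Longrightarrow> level s = 2 * m \<Longrightarrow> s = real m"
  by (erule level_cases) (auto, presburger)

lemma level_odd: "s \<ge> 0 \<Longrightarrow> level s = 2 * k + 1 \<Longrightarrow> real k < s \<and> s < real k + 1"
proof (erule level_cases)
  fix m assume "level s = 2 * k + 1" "level s = 2 * m"
  then show ?thesis by presburger
qed simp

lemma level_le_double: "s \<ge> 0 \<Longrightarrow> level s \<le> 2 * t \<longleftrightarrow> s \<le> real t"
proof (erule level_cases)
  fix k assume a: "real k < s" "s < real k + 1" "level s = 2 * k + 1"
  have "k < t \<longleftrightarrow> s \<le> real t"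
  proof
    assume "k < t" then show "s \<le> real t" using a by linarith
  next
    assume "s \<le> real t" then show "k < t" using a by simp
  qed
  then show ?thesis using a by auto
qed simp

lemma level_le: "s \<ge> 0 \<Longrightarrow> 2 * s \<le> real N \<Longrightarrow> level s \<le> N"
proof (erule level_cases)
  fix k assume "real k < s" "level s = 2 * k + 1" "2 * s \<le> real N"
  then have "real (2 * k) < real N" by simp
  then show ?thesis using \<open>level s = 2 * k + 1\<close> by simp
qed simp

text \<open>The circle is cut into the pieces \<open>0, \<dots>, N\<close> by the levels of \<open>depth N\<close>, which runs from
  \<open>0\<close> at \<open>1\<close> to \<open>N/2\<close> at \<open>-1\<close>: even pieces are conjugate pairs of points, odd pieces are pairs of
  conjugate open arcs, except that for odd \<open>N\<close> the last piece is a single arc around \<open>-1\<close>.\<close>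
definition depth :: "nat \<Rightarrow> complex \<Rightarrow> real" where
  "depth N z = real N * (1 - Re z) / 4"

definition piece :: "nat \<Rightarrow> complex \<Rightarrow> nat" where
  "piece N z = level (depth N z)"

lemma depth_bounds: "z \<in> S1 \<Longrightarrow> 0 \<le> depth N z \<and> 2 * depth N z \<le> real N"
proof -
  assume "z \<in> S1"
  then have "1 - Re z \<le> 2" "0 \<le> 1 - Re z" using Re_S1 by auto
  then have "real N * (1 - Re z) \<le> real N * 2" "0 \<le> real N * (1 - Re z)"
    by (auto intro: mult_left_mono)
  then show ?thesis by (auto simp: depth_def)
qed

lemma piece_le: "z \<in> S1 \<Longrightarrow> piece N z \<le> N"
  using depth_bounds level_le piece_def by metis

lemma piece_1: "piece N 1 = 0"
  using level_of_nat[of 0] by (simp add: piece_def depth_def)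

lemma piece_surj:
  assumes "N > 0" "j \<le> N"
  shows "\<exists>z\<in>S1. piece N z = j"
proof -
  have depth_surj: "\<exists>z\<in>S1. depth N z = v" if "0 \<le> v" "2 * v \<le> real N" for v
  proof -
    define x where "x = 1 - 4 * v / real N"
    have "x \<in> {-1..1}" using that assms by (auto simp: x_def divide_simps)
    then have "upper_point x \<in> S1" by (rule upper_point_in_S1)
    moreover have "depth N (upper_point x) = v" using assms by (simp add: depth_def x_def)
    ultimately show ?thesis by blast
  qed
  show ?thesis
  proof (cases "even j")
    case True
    then obtain m where m: "j = 2 * m" by blast
    then obtain z where "z \<in> S1" "depth N z = real m" using depth_surj[of "real m"] assms by auto
    then show ?thesis using m level_of_nat piece_def by metis
  next
    case False
    then obtain k where k: "j = 2 * k + 1" by (metis oddE)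
    then obtain z where "z \<in> S1" "depth N z = real k + 1/2"
      using depth_surj[of "real k + 1/2"] assms by auto
    moreover have "level (real k + 1/2) = 2 * k + 1" by (rule level_between) auto
    ultimately show ?thesis using k piece_def by metis
  qed
qed

definition piece_group :: "nat \<Rightarrow> (complex \<Rightarrow> complex) set" where
  "piece_group N = {h \<in> Homeo (top_of_set S1). \<forall>z\<in>S1. piece N (h z) = piece N z}"

lemma homeo_subgroup_piece_group: "homeo_subgroup (top_of_set S1) (piece_group N)"
  using homeo_subgroup_stabiliser[of "top_of_set S1" "piece N"] by (simp add: piece_group_def)

lemmas piece_orbit_refl = in_orbit_refl[OF homeo_subgroup_piece_group]
  and piece_orbit_trans = in_orbit_trans[OF homeo_subgroup_piece_group]
  and piece_orbit_sym =
    in_orbit_sym[OF homeo_subgroup_piece_group, unfolded topspace_euclidean_subtopology]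

lemma piece_groupD: "h \<in> piece_group N \<Longrightarrow> z \<in> S1 \<Longrightarrow> h z \<in> S1 \<and> piece N (h z) = piece N z"
  using Homeo_in_topspace[of h "top_of_set S1" z] by (auto simp: piece_group_def)

lemma reflection_in_piece_group: "reflection \<in> piece_group N"
  using reflection_Homeo by (auto simp: piece_group_def piece_def depth_def reflection_def)

lemma arc_warp_in_piece_group:
  assumes "arc_warp_data p q l"
    and level: "\<And>x. x \<in> {p<..<q} \<Longrightarrow> level (real N * (1 - x) / 4) = j"
  shows "arc_warp p q l \<in> piece_group N"
proof -
  interpret arc_warp_data p q l by fact
  have "piece N (arc_warp p q l z) = piece N z" if z: "z \<in> S1" for z
  proof (cases "Re z \<in> {p<..<q}")
    case True
    then have "Re (arc_warp p q l z) \<in> {p<..<q}" using Re_arc_warp_in z by blast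
    then show ?thesis using True level by (simp add: piece_def depth_def)
  next
    case False
    then show ?thesis using arc_warp_outside z by simp
  qed
  then show ?thesis unfolding piece_group_def using arc_warp_Homeo[OF assms(1)] by auto
qed

lemma piece_orbit_upper:
  assumes "z \<in> S1"
  obtains z' where "in_orbit (piece_group N) z z'" "z' \<in> S1" "Re z' = Re z" "Im z' \<ge> 0"
proof (cases "Im z \<ge> 0")
  case True
  then show ?thesis using that assms piece_orbit_refl by blast
next
  case False
  have "reflection z = cnj z" using assms by (simp add: reflection_def)
  then have "in_orbit (piece_group N) z (cnj z)"
    unfolding in_orbit_def using reflection_in_piece_group by metis
  then show ?thesis using that assms False by simp
qed

text \<open>Points over a real interval on which the level is constant lie in one orbit: fold both to
  the upper half circle by conjugation, then move one to the other by an \<open>arc_warp\<close>.\<close>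
lemma piece_orbit_interval:
  assumes "-1 \<le> p" "p < q" "q \<le> 1"
    and level: "\<And>x. x \<in> {p<..<q} \<Longrightarrow> level (real N * (1 - x) / 4) = j"
    and z: "z \<in> S1" "Re z \<in> {p<..<q}" and w: "w \<in> S1" "Re w \<in> {p<..<q}"
  shows "in_orbit (piece_group N) z w"
proof -
  obtain z' where z': "in_orbit (piece_group N) z z'" "z' \<in> S1" "Re z' = Re z" "Im z' \<ge> 0"
    using piece_orbit_upper z(1) .
  obtain w' where w': "in_orbit (piece_group N) w w'" "w' \<in> S1" "Re w' = Re w" "Im w' \<ge> 0"
    using piece_orbit_upper w(1) .
  obtain l where l: "l > 0" "interval_warp p q l (Re z) = Re w"
    using interval_warp_surj[OF assms(2)] z w by blast
  have data: "arc_warp_data p q l" using assms l by (auto simp: arc_warp_data_def)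
  have "arc_warp p q l z' = upper_point (Re w')"
    using z' w' l by (simp add: arc_warp_def)
  also have "\<dots> = w'" using upper_point_Re[OF w'(2,4)] .
  finally have "in_orbit (piece_group N) z' w'"
    unfolding in_orbit_def using arc_warp_in_piece_group[OF data level] by blast
  then show ?thesis
    using z'(1) piece_orbit_sym[OF w(1) w'(1)] piece_orbit_trans by blast
qed

lemma piece_orbit_even:
  assumes "N > 0" "z \<in> S1" "w \<in> S1" "piece N z = 2 * m" "piece N w = 2 * m"
  shows "in_orbit (piece_group N) z w"
proof -
  have "depth N z = real m" "depth N w = real m"
    using assms level_even depth_bounds unfolding piece_def by metis+
  then have "real N * (1 - Re z) = real N * (1 - Re w)" by (simp add: depth_def)
  then have "Re z = Re w" using assms(1) by simp
  then have "w = z \<or> w = cnj z" using S1_eq_if_Re_eq assms by blast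
  then show ?thesis
  proof
    assume "w = cnj z"
    then have "reflection z = w" using assms(2) by (simp add: reflection_def)
    then show ?thesis using reflection_in_piece_group unfolding in_orbit_def by blast
  qed (simp add: piece_orbit_refl)
qed

lemma Re_bounds_odd_piece:
  assumes "N > 0" "z \<in> S1" "piece N z = 2 * k + 1"
  shows "1 - 4 * (real k + 1) / real N < Re z" "Re z < 1 - 4 * real k / real N"
proof -
  have "real k < depth N z" "depth N z < real k + 1"
    using assms level_odd depth_bounds unfolding piece_def by metis+
  then have "4 * real k < real N * (1 - Re z)" "real N * (1 - Re z) < 4 * (real k + 1)"
    by (auto simp: depth_def)
  then show "1 - 4 * (real k + 1) / real N < Re z" "Re z < 1 - 4 * real k / real N"
    using assms(1) by (auto simp: field_simps)
qed

text \<open>For \<open>N = 2k+1\<close>, the points near \<open>-1\<close> belong to the last piece \<open>N\<close>: from \<open>|Im z| < 1/N\<close>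
  we get \<open>(Re z)\<^sup>2 > 1 - 1/N\<close>, hence \<open>1 - Re z > 2 - 1/N\<close> and \<open>depth N z > k\<close>.\<close>
lemma piece_near_minus_1:
  assumes N: "real N = 2 * real k + 1" and z: "z \<in> S1" "Re z \<le> 0"
    and y: "Im z \<in> {-1 / real N<..<1 / real N}"
  shows "piece N z = N"
proof -
  define e where "e = 1 / real N"
  have e: "0 < e" "e \<le> 1" "real N * e = 1" using N by (auto simp: e_def)
  have "\<bar>Im z\<bar> < e" using y by (auto simp: e_def)
  then have "(Im z)\<^sup>2 < e\<^sup>2" by (metis abs_ge_zero power2_abs power_strict_mono zero_less_numeral)
  moreover have "e\<^sup>2 \<le> e" using e by (simp add: power2_eq_square mult_le_cancel_left1)
  moreover have "(Re z)\<^sup>2 + (Im z)\<^sup>2 = 1" using in_S1_iff z by blast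
  moreover have "(Re z)\<^sup>2 \<le> - Re z"
  proof -
    have "Re z \<ge> -1" using Re_S1 z by auto
    then have "(- Re z) * (- Re z) \<le> (- Re z) * 1" using z by (intro mult_left_mono) auto
    then show ?thesis by (simp add: power2_eq_square)
  qed
  ultimately have "1 - Re z > 2 - e" by linarith
  then have "real N * (2 - e) < real N * (1 - Re z)" using N by simp
  then have "real k < depth N z" using N e by (simp add: depth_def algebra_simps)
  moreover have "depth N z < real k + 1" using depth_bounds[OF z(1), of N] N by linarith
  ultimately have "level (depth N z) = 2 * k + 1" by (rule level_between)
  then show ?thesis using N unfolding piece_def by linarith
qed

text \<open>For odd \<open>N\<close> the last piece is an arc through \<open>-1\<close>, which every \<open>arc_warp\<close> fixes; an
  \<open>arc_warp\<close> around \<open>\<i>\<close> rotated to \<open>-1\<close> moves it inside that piece.\<close>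
definition warp_near_minus_1 :: "nat \<Rightarrow> real \<Rightarrow> complex \<Rightarrow> complex" where
  "warp_near_minus_1 N l = rotation \<i> \<circ> arc_warp (- (1 / real N)) (1 / real N) l \<circ> rotation (- \<i>)"

lemma warp_near_minus_1_in_piece_group:
  assumes N: "real N = 2 * real k + 1" and l: "l > 0"
  shows "warp_near_minus_1 N l \<in> piece_group N"
proof -
  define e where "e = 1 / real N"
  have e: "0 < e" "e \<le> 1" using N by (auto simp: e_def)
  interpret arc_warp_data "-e" e l using e l by (auto simp: arc_warp_data_def)
  have "warp_near_minus_1 N l \<in> Homeo (top_of_set S1)"
    unfolding warp_near_minus_1_def e_def[symmetric]
    by (intro Homeo_comp rotation_Homeo arc_warp_Homeo) (auto simp: arc_warp_data_axioms)
  moreover have "piece N (warp_near_minus_1 N l z) = piece N z" if z: "z \<in> S1" for z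
  proof -
    define w where "w = - \<i> * z"
    have w: "w \<in> S1" "Re w = Im z" "Im w = - Re z" using z by (auto simp: w_def norm_mult)
    have Lz: "warp_near_minus_1 N l z = \<i> * arc_warp (-e) e l w"
      using z w arc_warp_in_S1[OF w(1)] by (simp add: warp_near_minus_1_def rotation_def w_def e_def)
    show ?thesis
    proof (cases "arc_warp (-e) e l w = w")
      case True
      then show ?thesis using Lz by (simp add: w_def)
    next
      case False
      then have r: "Re w \<in> {-e<..<e}" using arc_warp_outside w by blast
      have i: "Im w \<ge> 0" using False by (auto simp: arc_warp_def split: if_splits)
      have "piece N z = N" using piece_near_minus_1[OF N z] r i w by (simp add: e_def)
      moreover have "arc_warp (-e) e l w \<in> S1" "Re (arc_warp (-e) e l w) \<in> {-e<..<e}"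
          "Im (arc_warp (-e) e l w) \<ge> 0"
        using arc_warp_in_S1 Re_arc_warp_in Im_arc_warp_nonneg w r i by auto
      then have "warp_near_minus_1 N l z \<in> S1" "Re (warp_near_minus_1 N l z) \<le> 0"
          "Im (warp_near_minus_1 N l z) \<in> {-e<..<e}"
        using Lz by (auto simp: norm_mult)
      then have "piece N (warp_near_minus_1 N l z) = N"
        using piece_near_minus_1[OF N] by (simp add: e_def)
      ultimately show ?thesis by simp
    qed
  qed
  ultimately show ?thesis unfolding piece_group_def by auto
qed

lemma warp_near_minus_1_moves:
  assumes N: "real N = 2 * real k + 1"
  obtains l where "l > 0" "warp_near_minus_1 N l (-1) \<noteq> -1"
proof -
  define e where "e = 1 / real N"
  have e: "0 < e" "e \<le> 1" using N by (auto simp: e_def)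
  obtain l where l_pos: "l > 0" and hit: "interval_warp (-e) e l 0 = e / 2"
    using interval_warp_surj[of "-e" e 0 "e/2"] e by auto
  interpret arc_warp_data "-e" e l using e l_pos by (auto simp: arc_warp_data_def)
  have "\<i> \<in> S1" by simp
  then have "warp_near_minus_1 N l (-1) = \<i> * arc_warp (-e) e l \<i>"
    using arc_warp_in_S1 by (simp add: warp_near_minus_1_def rotation_def e_def)
  moreover have "Re (arc_warp (-e) e l \<i>) = e / 2" using Re_arc_warp[of \<i>] hit by simp
  ultimately have "Im (warp_near_minus_1 N l (-1)) = e / 2" by simp
  then have "warp_near_minus_1 N l (-1) \<noteq> -1" using e by auto
  then show ?thesis using that l_pos by blast
qed

lemma piece_orbit_odd_interior:
  assumes N: "N > 0" and z: "z \<in> S1" "piece N z = 2 * k + 1"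
  obtains z' where "in_orbit (piece_group N) z z'" "z' \<in> S1"
    "Re z' \<in> {max (-1) (1 - 4 * (real k + 1) / real N)<..<1 - 4 * real k / real N}"
proof (cases "Re z = -1")
  case False
  then have "Re z > -1" using Re_S1 z by force
  then show ?thesis using that Re_bounds_odd_piece[OF N z] z piece_orbit_refl by auto
next
  case True
  then have zm: "z = -1" using z in_S1_iff[of z] by (simp add: complex_eq_iff)
  have "real k < depth N z" "depth N z < real k + 1"
    using z level_odd depth_bounds unfolding piece_def by metis+
  then have "2 * k < N" "N < 2 * k + 2" using zm by (simp_all add: depth_def)
  then have "N = 2 * k + 1" by linarith
  then have Nk: "real N = 2 * real k + 1" by simp
  obtain l where l: "l > 0" "warp_near_minus_1 N l (-1) \<noteq> -1"
    using warp_near_minus_1_moves[OF Nk] by blast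
  have g: "warp_near_minus_1 N l \<in> piece_group N"
    using warp_near_minus_1_in_piece_group[OF Nk l(1)] .
  define z' where "z' = warp_near_minus_1 N l (-1)"
  have z': "z' \<in> S1" "piece N z' = 2 * k + 1" using piece_groupD[OF g, of "-1"] z zm
    by (auto simp: z'_def)
  have "Re z' \<noteq> -1"
  proof
    assume "Re z' = -1" then have "z' = -1" using z' in_S1_iff[of z'] by (simp add: complex_eq_iff)
    then show False using l by (simp add: z'_def)
  qed
  then have "Re z' > -1" using Re_S1 z' by force
  moreover have "in_orbit (piece_group N) z z'" using g zm by (auto simp: in_orbit_def z'_def)
  ultimately show ?thesis using that Re_bounds_odd_piece[OF N z'] z' by auto
qed

lemma piece_orbit_odd:
  assumes N: "N > 0" and z: "z \<in> S1" and w: "w \<in> S1"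
    and k: "piece N z = 2 * k + 1" "piece N w = 2 * k + 1"
  shows "in_orbit (piece_group N) z w"
proof -
  define p where "p = max (-1) (1 - 4 * (real k + 1) / real N)"
  define q where "q = 1 - 4 * real k / real N"
  obtain z' where z': "in_orbit (piece_group N) z z'" "z' \<in> S1" "Re z' \<in> {p<..<q}"
    using piece_orbit_odd_interior[OF N z k(1)] unfolding p_def q_def .
  obtain w' where w': "in_orbit (piece_group N) w w'" "w' \<in> S1" "Re w' \<in> {p<..<q}"
    using piece_orbit_odd_interior[OF N w k(2)] unfolding p_def q_def .
  have pq: "-1 \<le> p" "p < q" "q \<le> 1" using z'(3) by (auto simp: p_def q_def)
  have "level (real N * (1 - x) / 4) = 2 * k + 1" if "x \<in> {p<..<q}" for x
  proof (rule level_between)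
    have "x < 1 - 4 * real k / real N" "x > 1 - 4 * (real k + 1) / real N"
      using that by (auto simp: p_def q_def)
    then have "4 * real k < real N * (1 - x)" "real N * (1 - x) < 4 * (real k + 1)"
      using N by (auto simp: field_simps)
    then show "real k < real N * (1 - x) / 4" "real N * (1 - x) / 4 < real k + 1" by auto
  qed
  then have "in_orbit (piece_group N) z' w'"
    using piece_orbit_interval[OF pq] z'(2,3) w'(2,3) by blast
  then show ?thesis using z'(1) piece_orbit_sym[OF w w'(1)] piece_orbit_trans by blast
qed

lemma piece_orbit:
  assumes "N > 0" "z \<in> S1" "w \<in> S1" "piece N z = piece N w"
  shows "in_orbit (piece_group N) z w"
proof (cases "even (piece N z)")
  case True
  then obtain m where "piece N z = 2 * m" by blast
  then show ?thesis using piece_orbit_even assms by simp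
next
  case False
  then obtain k where "piece N z = 2 * k + 1" by (metis oddE)
  then show ?thesis using piece_orbit_odd assms by simp
qed

section \<open>Heights realised on the circle\<close>

text \<open>The pieces are added in increasing order, except that each odd piece, an open arc, is
  added only after the even piece at its far end, so that all sets in the chain are closed.\<close>
definition chain_pieces :: "nat \<Rightarrow> nat \<Rightarrow> nat set" where
  "chain_pieces N i = (if even i \<or> i = N then {..i} else {..Suc i} - {i})"

definition chain_set :: "nat \<Rightarrow> nat \<Rightarrow> complex set" where
  "chain_set N i = {z \<in> S1. piece N z \<in> chain_pieces N i}"

lemma chain_pieces_strict_mono:
  assumes "i < N"
  shows "chain_pieces N i \<subseteq> chain_pieces N (Suc i)"
    and "\<exists>j\<le>N. j \<in> chain_pieces N (Suc i) \<and> j \<notin> chain_pieces N i"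
proof -
  show "chain_pieces N i \<subseteq> chain_pieces N (Suc i)" using assms by (auto simp: chain_pieces_def)
  consider "odd i" | "even i" "Suc i = N" | "even i" "Suc (Suc i) \<le> N" using assms by linarith
  then show "\<exists>j\<le>N. j \<in> chain_pieces N (Suc i) \<and> j \<notin> chain_pieces N i"
  proof cases
    case 1 then show ?thesis using assms by (intro exI[of _ i]) (auto simp: chain_pieces_def)
  next
    case 2 then show ?thesis by (intro exI[of _ N]) (auto simp: chain_pieces_def)
  next
    case 3 then show ?thesis by (intro exI[of _ "Suc (Suc i)"]) (auto simp: chain_pieces_def)
  qed
qed

lemma closedin_chain_set:
  assumes "i \<le> N"
  shows "closedin (top_of_set S1) (chain_set N i)"
proof -
  have "continuous_on UNIV (depth N)" unfolding depth_def by (intro continuous_intros) auto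
  then have closed: "closed {z. depth N z \<le> c}" "closed {z. depth N z = c}" for c
    by (auto intro!: closed_Collect_le closed_Collect_eq continuous_on_const)
  have le: "z \<in> S1 \<Longrightarrow> piece N z \<le> 2 * t \<longleftrightarrow> depth N z \<le> real t" for z t
    unfolding piece_def using level_le_double depth_bounds by blast
  have eq: "z \<in> S1 \<Longrightarrow> piece N z = 2 * t \<longleftrightarrow> depth N z = real t" for z t
    unfolding piece_def using level_even depth_bounds level_of_nat by metis
  consider "i = N" | t where "i = 2 * t" "i \<noteq> N" | t where "i = 2 * t + 1" "i \<noteq> N"
    by (metis oddE evenE)
  then show ?thesis
  proof cases
    case 1
    then have "chain_set N i = S1" using piece_le by (auto simp: chain_set_def chain_pieces_def)
    then show ?thesis by simp
  next
    case (2 t)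
    then have "chain_set N i = S1 \<inter> {z. depth N z \<le> real t}"
      using le by (auto simp: chain_set_def chain_pieces_def)
    then show ?thesis using closed closedin_closed_Int by metis
  next
    case (3 t)
    then have "piece N z \<in> chain_pieces N i \<longleftrightarrow> piece N z \<le> 2 * t \<or> piece N z = 2 * (t + 1)" for z
      by (auto simp: chain_pieces_def)
    then have "chain_set N i = S1 \<inter> ({z. depth N z \<le> real t} \<union> {z. depth N z = real (t + 1)})"
      using le eq unfolding chain_set_def by blast
    then show ?thesis using closed closedin_closed_Int closed_Un by metis
  qed
qed

lemma closed_invariant_chain_set:
  assumes "N > 0"
  shows "closed_invariant_chain (piece_group N) (top_of_set S1) N (chain_set N)"
  unfolding closed_invariant_chain_def
proof (intro conjI allI impI)
  fix i assume "i \<le> N"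
  then show "closedin (top_of_set S1) (chain_set N i)" by (rule closedin_chain_set)
  have "1 \<in> chain_set N i" using piece_1 by (auto simp: chain_set_def chain_pieces_def intro: odd_pos)
  moreover have "chain_set N i \<subseteq> S1" by (auto simp: chain_set_def)
  moreover have "g z \<in> chain_set N i" if "g \<in> piece_group N" "z \<in> chain_set N i" for g z
    using piece_groupD[OF that(1)] that(2) by (auto simp: chain_set_def)
  ultimately show "invariant_set (top_of_set S1) (piece_group N) (chain_set N i)"
    unfolding invariant_set_def by auto
next
  fix i assume i: "i < N"
  obtain j where j: "j \<le> N" "j \<in> chain_pieces N (Suc i)" "j \<notin> chain_pieces N i"
    using chain_pieces_strict_mono(2)[OF i] by blast
  obtain z where "z \<in> S1" "piece N z = j" using piece_surj[OF assms j(1)] by blast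
  then show "chain_set N i \<subset> chain_set N (Suc i)"
    using chain_pieces_strict_mono(1)[OF i] j by (auto simp: chain_set_def)
next
  show "chain_set N N = topspace (top_of_set S1)"
    using piece_le by (auto simp: chain_set_def chain_pieces_def)
qed

lemma height_piece_group: "N > 0 \<Longrightarrow> height (piece_group N) (top_of_set S1) = enat N"
  using height_le_if_fibres_in_orbits[of "top_of_set S1" "piece N" N "piece_group N"]
    piece_le piece_orbit chain_le_height[OF closed_invariant_chain_set]
  by (simp add: order_antisym)

lemma height_Homeo_S1: "height (Homeo (top_of_set S1)) (top_of_set S1) = 0"
proof -
  have "in_orbit (Homeo (top_of_set S1)) z w" if "z \<in> S1" "w \<in> S1" for z w
  proof -
    have "cnj z * z = 1" using that complex_norm_square[of z] by (simp add: mult.commute)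
    then have "rotation (w * cnj z) z = w" using that by (simp add: rotation_def mult.assoc)
    moreover have "cmod (w * cnj z) = 1" using that by (simp add: norm_mult)
    ultimately show ?thesis using rotation_Homeo unfolding in_orbit_def by blast
  qed
  then have "height (Homeo (top_of_set S1)) (top_of_set S1) \<le> enat 0"
    by (intro height_le_if_fibres_in_orbits[where f = "\<lambda>_. 0"]) auto
  then show ?thesis by (metis le_zero_eq zero_enat_def)
qed

lemma height_trivial_S1: "height {id} (top_of_set S1) = \<infinity>"
proof -
  have long: "enat n \<le> height {id} (top_of_set S1)" if n: "n > 0" for n
  proof (rule chain_le_height)
    define Y where "Y i = S1 \<inter> {z. Re z \<le> -1 + 2 * real i / real n}" for i
    show "closed_invariant_chain {id} (top_of_set S1) n Y"
      unfolding closed_invariant_chain_def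
    proof (intro conjI allI impI)
      fix i
      show "closedin (top_of_set S1) (Y i)"
        unfolding Y_def by (intro closedin_closed_Int closed_Collect_le continuous_intros)
      have "-1 \<in> Y i" unfolding Y_def using n by simp
      moreover have "Y i \<subseteq> S1" by (auto simp: Y_def)
      ultimately show "invariant_set (top_of_set S1) {id} (Y i)"
        unfolding invariant_set_def by auto
    next
      fix i assume i: "i < n"
      define x where "x = -1 + 2 * real (Suc i) / real n"
      have "x \<in> {-1..1}" using i n by (auto simp: x_def divide_simps)
      then have "upper_point x \<in> Y (Suc i) - Y i"
        using upper_point_in_S1 n by (auto simp: Y_def x_def divide_simps)
      moreover have "Y i \<subseteq> Y (Suc i)" unfolding Y_def using n by (auto simp: divide_simps)
      ultimately show "Y i \<subset> Y (Suc i)" by blast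
    next
      show "Y n = topspace (top_of_set S1)" unfolding Y_def using n Re_S1 by auto
    qed
  qed
  show ?thesis
  proof (cases "height {id} (top_of_set S1)")
    case (enat m)
    then show ?thesis using long[of "Suc m"] by simp
  qed simp
qed

theorem theorem3p1:
  shows "P_h (top_of_set (sphere (0::complex) 1)) = UNIV"
proof -
  have "e \<in> P_h (top_of_set S1)" for e
  proof -
    consider "e = 0" | n where "e = enat n" "n > 0" | "e = \<infinity>"
      by (metis enat.exhaust gr0I zero_enat_def)
    then obtain G where "homeo_subgroup (top_of_set S1) G" "height G (top_of_set S1) = e"
      using homeo_subgroup_Homeo height_Homeo_S1 homeo_subgroup_piece_group height_piece_group
        homeo_subgroup_trivial height_trivial_S1
      by cases blast+
    then show ?thesis unfolding P_h_def by blast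
  qed
  then show ?thesis by auto
qed

end
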